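(* Let $\mathbb{G}$ be a homogeneous group of homogeneous dimension $Q\geq3$, $|\cdot|$ a homogeneous quasi-norm, $2\leq p<Q$ and $-\infty<\alpha<\frac{Q-p}{p}$. Let $f\in C_0^\infty(\mathbb{G}\setminus\{0\})$ be radial, $f(x)=\tilde f(|x|)$, and define $g(x)=|x|^{\frac{Q-p-\alpha p}{p}}f(x)$. Then $$\int_{\mathbb{G}}\frac{|\mathcal{R}f(x)|^p}{|x|^{\alpha p}}dx-\left(\frac{Q-p-\alpha p}{p}\right)^p\int_{\mathbb{G}}\frac{|f(x)|^p}{|x|^{(\alpha+1)p}}dx\geq c_p\int_{\mathbb{G}}|\mathcal{R}g(x)|^p|x|^{p-Q}dx,$$ where $c_p=\min_{0<t\leq1/2}\left((1-t)^p-t^p+pt^{p-1}\right)$.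
   Context: A homogeneous group is a connected simply connected Lie group $\mathbb{G}$ with dilations $x\mapsto\lambda x$ induced by $D_\lambda=\mathrm{Exp}(A\ln\lambda)$ on its Lie algebra ($A$ diagonalisable with positive eigenvalues, $D_\lambda$ Lie algebra automorphisms), and homogeneous dimension $Q=\mathrm{Tr}\,A$. A homogeneous quasi-norm is a continuous nonnegative function $|\cdot|$, vanishing only at $0$, with $|x^{-1}|=|x|$, $|\lambda x|=\lambda|x|$. A function is radial if it depends only on $|x|$. Writing $x=ry$, $r=|x|$, $|y|=1$, the radial derivative is $\mathcal{R}f(x)=\frac{d}{dr}f(ry)$. Integrals are with respect to Haar measure. *)

theory Defs
  imports "HOL-Analysis.Analysis"
begin

text \<open>Homogeneous groups in exponential coordinates: the underlying set is R^N
  (here real^'n), the identity is 0, the inverse of x is -x, the dilations are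
  diagonal with positive weights nu i, and Haar measure is Lebesgue measure.\<close>

definition dil :: "('n::finite \<Rightarrow> real) \<Rightarrow> real \<Rightarrow> real^'n \<Rightarrow> real^'n" where
  "dil \<nu> r x = (\<chi> i. r powr (\<nu> i) * x $ i)"

definition hom_dim :: "('n::finite \<Rightarrow> real) \<Rightarrow> real" where
  "hom_dim \<nu> = (\<Sum>i\<in>UNIV. \<nu> i)"

definition homogeneous_group ::
  "(real^'n \<Rightarrow> real^'n \<Rightarrow> real^'n) \<Rightarrow> ('n::finite \<Rightarrow> real) \<Rightarrow> bool" where
  "homogeneous_group gmul \<nu> \<longleftrightarrow>
     (\<forall>i. \<nu> i > 0) \<and>
     (\<forall>x y z. gmul (gmul x y) z = gmul x (gmul y z)) \<and>
     (\<forall>x. gmul 0 x = x \<and> gmul x 0 = x) \<and>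
     (\<forall>x. gmul x (- x) = 0 \<and> gmul (- x) x = 0) \<and>
     continuous_on UNIV (\<lambda>(x, y). gmul x y) \<and>
     (\<forall>r>0. \<forall>x y. dil \<nu> r (gmul x y) = gmul (dil \<nu> r x) (dil \<nu> r y)) \<and>
     (\<forall>a. gmul a \<in> measurable lborel lborel \<and> distr lborel lborel (gmul a) = lborel)"

definition hom_quasi_norm :: "('n::finite \<Rightarrow> real) \<Rightarrow> (real^'n \<Rightarrow> real) \<Rightarrow> bool" where
  "hom_quasi_norm \<nu> N \<longleftrightarrow>
     continuous_on UNIV N \<and>
     (\<forall>x. N x \<ge> 0) \<and>
     (\<forall>x. N x = 0 \<longleftrightarrow> x = 0) \<and>
     (\<forall>x. N (- x) = N x) \<and>
     (\<forall>r>0. \<forall>x. N (dil \<nu> r x) = r * N x)"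

text \<open>Radial derivative: writing x = r y with r = |x|, |y| = 1,
  R f (x) = d/dr f(r y) evaluated at r = |x|.\<close>
definition rad_deriv ::
  "('n::finite \<Rightarrow> real) \<Rightarrow> (real^'n \<Rightarrow> real) \<Rightarrow> (real^'n \<Rightarrow> real) \<Rightarrow> real^'n \<Rightarrow> real" where
  "rad_deriv \<nu> N f x = deriv (\<lambda>r. f (dil \<nu> r (dil \<nu> (1 / N x) x))) (N x)"

coinductive smooth_fun :: "('a::real_normed_vector \<Rightarrow> real) \<Rightarrow> bool" where
  "(\<forall>x. f differentiable (at x)) \<Longrightarrow>
   (\<forall>v. smooth_fun (\<lambda>x. frechet_derivative f (at x) v)) \<Longrightarrow> smooth_fun f"

definition c_const :: "real \<Rightarrow> real" where
  "c_const p = (INF t\<in>{0<..1/2}. (1 - t) powr p - t powr p + p * t powr (p - 1))"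

end

theory Submission
  imports Defs
begin

text \<open>In polar coordinates \<open>x = r y\<close>, Haar measure becomes \<open>Q |{N < 1}| r\<^sup>Q\<^sup>-\<^sup>1 dr\<close> and all
  three integrals are one-dimensional. Put \<open>C = (Q - p - \<alpha> p) / p > 0\<close> and \<open>G = r\<^sup>C f\<close>, so
  that the last integral is that of \<open>|G'|\<^sup>p r\<^sup>p\<^sup>-\<^sup>1\<close>. The elementary inequality
  \<open>|A + B|\<^sup>p \<ge> |A|\<^sup>p + c\<^sub>p |B|\<^sup>p + p sgn A |A|\<^sup>p\<^sup>-\<^sup>1 B\<close>, valid for \<open>p \<ge> 2\<close>, applied with
  \<open>A = C G / r\<close> and \<open>B = - G'\<close> and weighted by \<open>r\<^sup>p\<^sup>-\<^sup>1\<close>, bounds the difference of the two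
  sides of the theorem pointwise from below by \<open>c\<^sub>p |G'|\<^sup>p r\<^sup>p\<^sup>-\<^sup>1\<close> plus the exact derivative
  \<open>- C\<^sup>p\<^sup>-\<^sup>1 (|G|\<^sup>p)'\<close>, whose integral vanishes because \<open>G\<close> has compact support in \<open>(0, \<infinity>)\<close>.
  Dividing by \<open>|B|\<^sup>p\<close>, the elementary inequality is a one-variable inequality whose worst case
  on \<open>-1 < A/B < 0\<close> is exactly the constant \<open>c\<^sub>p\<close>.\<close>

section \<open>An elementary inequality\<close>

lemma powr_ge_tangent:
  fixes q x y :: real
  assumes q: "q \<ge> 1" and x: "x > 0" and y: "y \<ge> 0"
  shows "y powr q \<ge> x powr q + q * x powr (q - 1) * (y - x)"
proof (cases "y = 0")
  case True
  have "x powr q = x powr (q - 1) * x" using x by (simp add: powr_diff)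
  then show ?thesis using True q x by (simp add: algebra_simps)
next
  case False
  hence yp: "y > 0" using y by simp
  have D: "\<And>z. z > 0 \<Longrightarrow> ((\<lambda>z. z powr q) has_real_derivative q * z powr (q - 1)) (at z)"
    by (auto intro!: derivative_eq_intros)
  consider "x < y" | "x = y" | "y < x" by linarith
  then show ?thesis
  proof cases
    case 1
    then obtain z where z: "x < z" "z < y" "y powr q - x powr q = (y - x) * (q * z powr (q - 1))"
      using MVT2[of x y "\<lambda>z. z powr q" "\<lambda>z. q * z powr (q - 1)"] D x by force
    have "x powr (q - 1) \<le> z powr (q - 1)" using z x q by (intro powr_mono2) auto
    hence "q * x powr (q - 1) * (y - x) \<le> (y - x) * (q * z powr (q - 1))" using 1 q
      by (simp add: mult_left_mono)
    then show ?thesis using z by linarith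
  next
    case 2 then show ?thesis by simp
  next
    case 3
    then obtain z where z: "y < z" "z < x" "x powr q - y powr q = (x - y) * (q * z powr (q - 1))"
      using MVT2[of y x "\<lambda>z. z powr q" "\<lambda>z. q * z powr (q - 1)"] D yp by force
    have "z powr (q - 1) \<le> x powr (q - 1)" using z yp q by (intro powr_mono2) auto
    hence "(x - y) * (q * z powr (q - 1)) \<le> (x - y) * (q * x powr (q - 1))" using 3 q
      by (simp add: mult_left_mono)
    then show ?thesis using z by (simp add: algebra_simps)
  qed
qed

lemma powr_forward_tangent_gap_ge_one:
  fixes p s :: real assumes p: "p \<ge> 2" and s: "s \<ge> 0"
  shows "(s + 1) powr p - s powr p - p * s powr (p - 1) \<ge> 1"
proof -
  let ?f = "\<lambda>s. (s + 1) powr p - s powr p - p * s powr (p - 1)"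
  have "?f 0 \<le> ?f s"
  proof (rule DERIV_nonneg_imp_increasing_open[OF s])
    fix x assume x: "0 < x" "x < s"
    have "DERIV ?f x :> p * ((x + 1) powr (p - 1) - x powr (p - 1) - (p - 1) * x powr (p - 2))"
      using x p by (auto intro!: derivative_eq_intros simp: algebra_simps)
    moreover have "(x + 1) powr (p - 1) \<ge> x powr (p - 1) + (p - 1) * x powr (p - 1 - 1) * ((x + 1) - x)"
      using x p by (intro powr_ge_tangent) auto
    ultimately show "\<exists>y. DERIV ?f x :> y \<and> y \<ge> 0" using p by force
  qed (use p in \<open>auto intro!: continuous_intros continuous_on_powr'\<close>)
  thus ?thesis by simp
qed

lemma powr_backward_tangent_gap_ge_one:
  fixes p s :: real assumes p: "p \<ge> 2" and s: "s \<ge> 0"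
  shows "s powr p - (s + 1) powr p + p * (s + 1) powr (p - 1) \<ge> 1"
proof -
  let ?f = "\<lambda>s. s powr p - (s + 1) powr p + p * (s + 1) powr (p - 1)"
  have "?f 0 \<le> ?f s"
  proof (rule DERIV_nonneg_imp_increasing_open[OF s])
    fix x assume x: "0 < x" "x < s"
    have "DERIV ?f x :> p * (x powr (p - 1) - (x + 1) powr (p - 1) + (p - 1) * (x + 1) powr (p - 2))"
      using x p by (auto intro!: derivative_eq_intros simp: algebra_simps)
    moreover have "x powr (p - 1) \<ge> (x + 1) powr (p - 1) + (p - 1) * (x + 1) powr (p - 1 - 1) * (x - (x + 1))"
      using x p by (intro powr_ge_tangent) auto
    ultimately show "\<exists>y. DERIV ?f x :> y \<and> y \<ge> 0" using p by force
  qed (use p in \<open>auto intro!: continuous_intros continuous_on_powr'\<close>)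
  thus ?thesis using p by simp
qed

definition c_profile :: "real \<Rightarrow> real \<Rightarrow> real" where
  "c_profile p t = (1 - t) powr p - t powr p + p * t powr (p - 1)"

lemma c_const_le_profile:
  fixes p t :: real assumes p: "p \<ge> 0" and t: "0 < t" "t \<le> 1/2"
  shows "c_const p \<le> c_profile p t"
  unfolding c_const_def c_profile_def
proof (rule cInf_lower)
  show "bdd_below ((\<lambda>t. (1 - t) powr p - t powr p + p * t powr (p - 1)) ` {0<..1/2})"
  proof (rule bdd_belowI2[where m=0])
    fix x :: real assume x: "x \<in> {0<..1/2}"
    have "x powr p \<le> (1 - x) powr p" using x p by (intro powr_mono2) auto
    then show "0 \<le> (1 - x) powr p - x powr p + p * x powr (p - 1)" using p by simp
  qed
qed (use t in auto)

lemma c_const_le_one: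
  fixes p :: real assumes p: "p \<ge> 2"
  shows "c_const p \<le> 1"
proof -
  have "c_const p \<le> c_profile p (1/2)" using p by (intro c_const_le_profile) auto
  also have "\<dots> = p / 2 powr (p - 1)" by (simp add: c_profile_def powr_divide)
  also have "\<dots> \<le> 1"
  proof -
    have "2 powr (p - 1) \<ge> 1 powr (p - 1) + (p - 1) * 1 powr (p - 1 - 1) * (2 - 1)"
      using p by (intro powr_ge_tangent) auto
    thus ?thesis by simp
  qed
  finally show ?thesis .
qed

lemma c_profile_reflect_le:
  fixes p t :: real assumes p: "p \<ge> 2" and t: "1/2 \<le> t" "t < 1"
  shows "c_profile p (1 - t) \<le> c_profile p t"
proof -
  define s where "s = 1 - t"
  have s: "0 < s" "s \<le> t" "1 - s = t" using t by (auto simp: s_def)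
  define X where "X = t powr (p - 1)"
  define Y where "Y = s powr (p - 1)"
  have tp: "t powr p = t * X" using s by (simp add: X_def powr_diff)
  have sp: "s powr p = s * Y" using s by (simp add: Y_def powr_diff)
  have tX: "X = t * t powr (p - 2)" and sY: "Y = s * s powr (p - 2)"
    using s powr_mult_base[of t "p - 2"] powr_mult_base[of s "p - 2"] by (simp_all add: X_def Y_def)
  have XY: "Y \<le> X" unfolding X_def Y_def using s p by (intro powr_mono2) auto
  have "s powr (p - 2) \<le> t powr (p - 2)" using s p by (intro powr_mono2) auto
  hence "t * Y \<le> s * X" using s by (simp add: tX sY mult_left_mono algebra_simps)
  moreover have "X - Y - (t * X - s * Y) = s * X - t * Y" by (simp add: s_def algebra_simps)
  ultimately have "t * X - s * Y \<le> X - Y" by linarith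
  moreover have "c_profile p t - c_profile p s = p * (X - Y) - 2 * (t * X - s * Y)"
    by (simp add: c_profile_def s(3) s_def[symmetric] tp sp X_def[symmetric] Y_def[symmetric]
        algebra_simps)
  ultimately show ?thesis using XY p mult_right_mono[of 2 p "X - Y"] by (simp add: s_def)
qed

lemma c_const_le_profile_unit:
  fixes p t :: real assumes p: "p \<ge> 2" and t: "0 < t" "t < 1"
  shows "c_const p \<le> c_profile p t"
proof (cases "t \<le> 1/2")
  case True then show ?thesis using c_const_le_profile[of p t] p t by simp
next
  case False
  have "c_const p \<le> c_profile p (1 - t)" using False p t by (intro c_const_le_profile) auto
  also have "\<dots> \<le> c_profile p t" using False p t by (intro c_profile_reflect_le) auto
  finally show ?thesis .
qed

definition signed_powr :: "real \<Rightarrow> real \<Rightarrow> real" where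
  "signed_powr p y = sgn y * \<bar>y\<bar> powr (p - 1)"

lemma signed_powr_0 [simp]: "signed_powr p 0 = 0"
  by (simp add: signed_powr_def)

lemma signed_powr_mult_pos: "c > 0 \<Longrightarrow> signed_powr p (c * y) = c powr (p - 1) * signed_powr p y"
  by (simp add: signed_powr_def sgn_mult abs_mult powr_mult)

lemma abs_add_one_powr_ge:
  fixes p u :: real assumes p: "p \<ge> 2"
  shows "\<bar>u + 1\<bar> powr p - \<bar>u\<bar> powr p - p * signed_powr p u \<ge> c_const p"
proof -
  have c1: "c_const p \<le> 1" using c_const_le_one[OF p] .
  consider "u \<ge> 0" | "u \<le> -1" | "-1 < u" "u < 0" by linarith
  then show ?thesis
  proof cases
    case 1
    have "signed_powr p u = u powr (p - 1)" using 1 by (cases "u = 0") (auto simp: signed_powr_def)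
    then show ?thesis using powr_forward_tangent_gap_ge_one[OF p 1] 1 c1 by (simp add: add.commute)
  next
    case 2
    define s where "s = - u - 1"
    have "s \<ge> 0" "\<bar>u + 1\<bar> = s" "\<bar>u\<bar> = s + 1" "signed_powr p u = - ((s + 1) powr (p - 1))"
      using 2 by (auto simp: s_def signed_powr_def)
    then show ?thesis using powr_backward_tangent_gap_ge_one[OF p] c1 by fastforce
  next
    case 3
    have "\<bar>u + 1\<bar> powr p - \<bar>u\<bar> powr p - p * signed_powr p u = c_profile p (- u)"
      using 3 by (simp add: c_profile_def signed_powr_def add.commute)
    then show ?thesis using c_const_le_profile_unit[OF p, of "- u"] 3 by simp
  qed
qed

lemma abs_add_powr_ge:
  fixes p A B :: real assumes p: "p \<ge> 2"
  shows "\<bar>A + B\<bar> powr p \<ge> \<bar>A\<bar> powr p + c_const p * \<bar>B\<bar> powr p + p * signed_powr p A * B"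
proof (cases "B = 0")
  case True then show ?thesis using p by simp
next
  case False
  define u where "u = A / B"
  have A: "A = u * B" using False by (simp add: u_def)
  have "A + B = (u + 1) * B" by (simp add: A distrib_right)
  hence e1: "\<bar>A + B\<bar> powr p = \<bar>u + 1\<bar> powr p * \<bar>B\<bar> powr p"
    by (simp add: abs_mult powr_mult)
  have e2: "\<bar>A\<bar> powr p = \<bar>u\<bar> powr p * \<bar>B\<bar> powr p"
    by (simp add: A abs_mult powr_mult)
  have e3: "signed_powr p A * B = signed_powr p u * \<bar>B\<bar> powr p"
  proof -
    have "signed_powr p A * B = sgn u * \<bar>u\<bar> powr (p - 1) * (\<bar>B\<bar> powr (p - 1) * (sgn B * B))"
      by (simp add: signed_powr_def A sgn_mult abs_mult powr_mult)
    also have "\<bar>B\<bar> powr (p - 1) * (sgn B * B) = \<bar>B\<bar> powr p"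
      using False by (simp add: sgn_if powr_diff)
    finally show ?thesis by (simp add: signed_powr_def)
  qed
  have "\<bar>A\<bar> powr p + c_const p * \<bar>B\<bar> powr p + p * signed_powr p A * B
     = (\<bar>u\<bar> powr p + c_const p + p * signed_powr p u) * \<bar>B\<bar> powr p"
    unfolding mult.assoc e3 e2 by (simp add: algebra_simps)
  also have "\<dots> \<le> \<bar>u + 1\<bar> powr p * \<bar>B\<bar> powr p"
    using abs_add_one_powr_ge[OF p, of u] by (intro mult_right_mono) auto
  finally show ?thesis using e1 by simp
qed

lemma continuous_on_signed_powr:
  fixes p :: real assumes p: "p \<ge> 2"
  shows "continuous_on UNIV (signed_powr p)"
proof -
  have "signed_powr p y = y * \<bar>y\<bar> powr (p - 2)" for y
  proof (cases "y = 0")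
    case False
    have "\<bar>y\<bar> powr (p - 1) = \<bar>y\<bar> * \<bar>y\<bar> powr (p - 2)"
      using powr_mult_base[of "\<bar>y\<bar>" "p - 2"] False by simp
    thus ?thesis unfolding signed_powr_def by (simp add: mult.assoc[symmetric] sgn_mult_abs)
  qed simp
  moreover have "continuous_on UNIV (\<lambda>y::real. y * \<bar>y\<bar> powr (p - 2))"
  proof (cases "p = 2")
    case False
    then show ?thesis using p by (intro continuous_intros continuous_on_powr') auto
  next
    case True
    then have "(\<lambda>y::real. y * \<bar>y\<bar> powr (p - 2)) = (\<lambda>y. y)" by (auto simp: fun_eq_iff)
    then show ?thesis by (metis continuous_on_id)
  qed
  ultimately show ?thesis by (simp add: fun_eq_iff)
qed

lemma continuous_on_abs_powr [continuous_intros]: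
  fixes u :: "'a::topological_space \<Rightarrow> real"
  shows "continuous_on S u \<Longrightarrow> p > 0 \<Longrightarrow> continuous_on S (\<lambda>x. \<bar>u x\<bar> powr p)"
  by (intro continuous_on_powr' continuous_intros) auto

lemma has_real_derivative_abs_powr:
  fixes p y :: real assumes p: "p \<ge> 2"
  shows "((\<lambda>y. \<bar>y\<bar> powr p) has_real_derivative p * signed_powr p y) (at y)"
proof -
  consider "y > 0" | "y < 0" | "y = 0" by linarith
  then show ?thesis
  proof cases
    case 1
    have "((\<lambda>y. y powr p) has_real_derivative p * signed_powr p y) (at y)"
      using 1 by (auto intro!: derivative_eq_intros simp: signed_powr_def)
    thus ?thesis by (rule has_field_derivative_transform_within_open[where S="{0<..}"]) (use 1 in auto)
  next
    case 2
    have "((\<lambda>y. (- y) powr p) has_real_derivative p * signed_powr p y) (at y)"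
      using 2 by (auto intro!: derivative_eq_intros simp: signed_powr_def)
    thus ?thesis by (rule has_field_derivative_transform_within_open[where S="{..<0}"]) (use 2 in auto)
  next
    case 3
    have "isCont (signed_powr p) 0"
      using continuous_on_signed_powr[OF p] by (simp add: continuous_on_eq_continuous_at)
    hence lim: "(signed_powr p \<longlongrightarrow> 0) (at 0)" by (simp add: isCont_def)
    have "\<forall>\<^sub>F h in at (0::real). signed_powr p h = \<bar>h\<bar> powr p / h"
    proof (rule eventually_mono[OF eventually_neq_at_within[of 0 0 UNIV]])
      fix h :: real assume h: "h \<noteq> 0"
      have "\<bar>h\<bar> powr (p - 1) * \<bar>h\<bar> = \<bar>h\<bar> powr p" using h by (simp add: powr_diff)
      thus "signed_powr p h = \<bar>h\<bar> powr p / h" using h by (auto simp: field_simps sgn_if signed_powr_def)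
    qed
    hence "((\<lambda>h. \<bar>h\<bar> powr p / h) \<longlongrightarrow> 0) (at 0)" using tendsto_cong lim by fastforce
    thus ?thesis using 3 p by (simp add: has_field_derivative_iff)
  qed
qed

section \<open>The one-dimensional inequality\<close>

lemma set_integral_signed_powr_deriv:
  fixes G G' :: "real \<Rightarrow> real"
  assumes p: "p \<ge> 2" and ab: "a \<le> b"
    and G: "\<And>r. r \<in> {a..b} \<Longrightarrow> (G has_real_derivative G' r) (at r)"
    and G': "continuous_on {a..b} G'"
  shows "set_integrable lborel {a..b} (\<lambda>r. p * signed_powr p (G r) * G' r)"
    and "(LINT r:{a..b}|lborel. p * signed_powr p (G r) * G' r) = \<bar>G b\<bar> powr p - \<bar>G a\<bar> powr p"
proof -
  have "continuous_on {a..b} G"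
    using G by (intro continuous_at_imp_continuous_on ballI DERIV_isCont) auto
  hence cont: "continuous_on {a..b} (\<lambda>r. p * signed_powr p (G r) * G' r)"
    using continuous_on_signed_powr[OF p] G'
    by (intro continuous_intros continuous_on_compose2[of UNIV "signed_powr p" "{a..b}" G]) auto
  thus "set_integrable lborel {a..b} (\<lambda>r. p * signed_powr p (G r) * G' r)"
    by (rule borel_integrable_atLeastAtMost')
  show "(LINT r:{a..b}|lborel. p * signed_powr p (G r) * G' r) = \<bar>G b\<bar> powr p - \<bar>G a\<bar> powr p"
    unfolding set_lebesgue_integral_def
  proof (rule integral_FTC_atLeastAtMost[OF ab _ cont])
    fix x assume "a \<le> x" "x \<le> b"
    then have "((\<lambda>r. \<bar>G r\<bar> powr p) has_real_derivative p * signed_powr p (G x) * G' x) (at x)"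
      using DERIV_chain2[OF has_real_derivative_abs_powr[OF p] G[of x]] by (simp add: mult.assoc)
    thus "((\<lambda>r. \<bar>G r\<bar> powr p) has_vector_derivative p * signed_powr p (G x) * G' x) (at x within {a..b})"
      by (simp add: has_real_derivative_iff_has_vector_derivative[symmetric] has_field_derivative_at_within)
  qed
qed

text \<open>With \<open>G = r\<^sup>C F\<close> one has \<open>r\<^sup>C D = G' - C r\<^sup>C\<^sup>-\<^sup>1 F\<close>: this is \<open>abs_add_powr_ge\<close> for
  \<open>A = C r\<^sup>C\<^sup>-\<^sup>1 F\<close>, \<open>B = - G'\<close>, multiplied by \<open>r\<^sup>p\<^sup>-\<^sup>1\<close>. The left-hand side is the exact
  derivative \<open>- C\<^sup>p\<^sup>-\<^sup>1 (|G|\<^sup>p)'\<close>.\<close>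

lemma hardy_pointwise:
  fixes p r C Q \<alpha> F D :: real
  assumes p: "p \<ge> 2" and r: "r > 0" and C: "C > 0" and Cp: "C * p = Q - p - \<alpha> * p"
  defines "G' \<equiv> C * r powr (C - 1) * F + r powr C * D"
  shows "- (C powr (p - 1)) * (p * signed_powr p (r powr C * F) * G')
     \<le> r powr (Q - 1) * (\<bar>D\<bar> powr p / r powr (\<alpha> * p))
       - C powr p * (r powr (Q - 1) * (\<bar>F\<bar> powr p / r powr ((\<alpha> + 1) * p)))
       - c_const p * (r powr (Q - 1) * (\<bar>G'\<bar> powr p * r powr (p - Q)))"
proof -
  define A where "A = C * r powr (C - 1) * F"
  define w where "w = r powr (p - 1)"
  have "w * (\<bar>A\<bar> powr p + c_const p * \<bar>- G'\<bar> powr p + p * signed_powr p A * - G') \<le> w * \<bar>A - G'\<bar> powr p"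
    using abs_add_powr_ge[OF p, of A "- G'"] r by (intro mult_left_mono) (auto simp: w_def)
  then have E: "w * \<bar>A\<bar> powr p + c_const p * (w * \<bar>- G'\<bar> powr p) + p * (w * signed_powr p A) * - G'
      \<le> w * \<bar>A - G'\<bar> powr p"
    by (simp add: algebra_simps)
  have e1: "w * \<bar>A - G'\<bar> powr p = r powr (Q - 1) * (\<bar>D\<bar> powr p / r powr (\<alpha> * p))"
  proof -
    have e: "p - 1 + C * p = Q - 1 - \<alpha> * p" using Cp by (simp add: algebra_simps)
    have "w * \<bar>A - G'\<bar> powr p = w * (r powr C) powr p * \<bar>D\<bar> powr p"
      by (simp add: A_def G'_def abs_mult powr_mult mult_ac)
    also have "w * (r powr C) powr p = r powr (Q - 1) / r powr (\<alpha> * p)"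
      unfolding w_def powr_powr by (simp only: powr_add[symmetric] powr_diff[symmetric] e)
    finally show ?thesis by simp
  qed
  have e2: "w * \<bar>A\<bar> powr p = C powr p * (r powr (Q - 1) * (\<bar>F\<bar> powr p / r powr ((\<alpha> + 1) * p)))"
  proof -
    have e: "p - 1 + (C - 1) * p = Q - 1 - (\<alpha> + 1) * p" using Cp by (simp add: algebra_simps)
    have "w * \<bar>A\<bar> powr p = C powr p * (w * (r powr (C - 1)) powr p) * \<bar>F\<bar> powr p"
      using C by (simp add: A_def abs_mult powr_mult mult_ac)
    also have "w * (r powr (C - 1)) powr p = r powr (Q - 1) / r powr ((\<alpha> + 1) * p)"
      unfolding w_def powr_powr by (simp only: powr_add[symmetric] powr_diff[symmetric] e)
    finally show ?thesis by simp
  qed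
  have e3: "w * \<bar>- G'\<bar> powr p = r powr (Q - 1) * (\<bar>G'\<bar> powr p * r powr (p - Q))"
  proof -
    have "w = r powr (Q - 1) * r powr (p - Q)" using r by (simp add: w_def flip: powr_add)
    then show ?thesis by (simp add: mult_ac)
  qed
  have e4: "w * signed_powr p A = C powr (p - 1) * signed_powr p (r powr C * F)"
  proof -
    have "w * (C * r powr (C - 1)) powr (p - 1) = C powr (p - 1) * (r powr C) powr (p - 1)"
    proof -
      have "p - 1 + (C - 1) * (p - 1) = C * (p - 1)" by (simp add: algebra_simps)
      then show ?thesis using C r by (simp add: w_def powr_mult powr_powr flip: powr_add)
    qed
    then show ?thesis unfolding A_def using C r by (simp add: signed_powr_mult_pos)
  qed
  show ?thesis using E unfolding e1 e2 e3 e4 by (simp add: algebra_simps)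
qed

lemma hardy_interval:
  fixes F D :: "real \<Rightarrow> real" and p C Q \<alpha> a b :: real
  assumes p: "p \<ge> 2" and C: "C > 0" and Cp: "C * p = Q - p - \<alpha> * p" and ab: "0 < a" "a \<le> b"
    and F: "\<And>r. r \<in> {a..b} \<Longrightarrow> (F has_real_derivative D r) (at r)"
    and D: "continuous_on {a..b} D"
    and Fa: "F a = 0" and Fb: "F b = 0"
  shows "c_const p * (LINT r:{a..b}|lborel.
            r powr (Q - 1) * (\<bar>C * r powr (C - 1) * F r + r powr C * D r\<bar> powr p * r powr (p - Q)))
    \<le> (LINT r:{a..b}|lborel. r powr (Q - 1) * (\<bar>D r\<bar> powr p / r powr (\<alpha> * p)))
      - C powr p * (LINT r:{a..b}|lborel. r powr (Q - 1) * (\<bar>F r\<bar> powr p / r powr ((\<alpha> + 1) * p)))"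
proof -
  define G where "G r = r powr C * F r" for r
  define G' where "G' r = C * r powr (C - 1) * F r + r powr C * D r" for r
  define h1 where "h1 r = r powr (Q - 1) * (\<bar>D r\<bar> powr p / r powr (\<alpha> * p))" for r
  define h2 where "h2 r = r powr (Q - 1) * (\<bar>F r\<bar> powr p / r powr ((\<alpha> + 1) * p))" for r
  define h3 where "h3 r = r powr (Q - 1) * (\<bar>G' r\<bar> powr p * r powr (p - Q))" for r
  have G: "(G has_real_derivative G' r) (at r)" if "r \<in> {a..b}" for r
  proof -
    have "((\<lambda>r. r powr C) has_real_derivative C * r powr (C - 1)) (at r)"
      using that ab by (auto intro!: derivative_eq_intros)
    from DERIV_mult[OF this F[OF that]] show ?thesis
      unfolding G_def G'_def by (simp add: algebra_simps)
  qed
  have Fc: "continuous_on {a..b} F"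
    using F by (intro continuous_at_imp_continuous_on ballI DERIV_isCont) auto
  hence G'c: "continuous_on {a..b} G'"
    unfolding G'_def using ab D by (intro continuous_intros) auto
  have h123: "set_integrable lborel {a..b} h1" "set_integrable lborel {a..b} h2"
    "set_integrable lborel {a..b} h3"
    unfolding h1_def h2_def h3_def using ab p D Fc G'c
    by (auto intro!: borel_integrable_atLeastAtMost' continuous_intros)
  have pointwise: "- (C powr (p - 1)) * (p * signed_powr p (G r) * G' r)
      \<le> h1 r - C powr p * h2 r - c_const p * h3 r" if "r \<in> {a..b}" for r
    using hardy_pointwise[OF p _ C Cp, of r "F r" "D r"] that ab
    by (simp add: G_def G'_def h1_def h2_def h3_def)
  note ftc = set_integral_signed_powr_deriv[OF p ab(2) G G'c]
  have "0 = - (C powr (p - 1)) * (LINT r:{a..b}|lborel. p * signed_powr p (G r) * G' r)"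
    using ftc(2) Fa Fb p by (simp add: G_def)
  also have "\<dots> = (LINT r:{a..b}|lborel. - (C powr (p - 1)) * (p * signed_powr p (G r) * G' r))"
    by (rule set_integral_mult_right[symmetric])
  also have "\<dots> \<le> (LINT r:{a..b}|lborel. h1 r - C powr p * h2 r - c_const p * h3 r)"
    using h123 by (intro set_integral_mono set_integrable_mult_right ftc(1) pointwise set_integral_diff(1))
  also have "\<dots> = (LINT r:{a..b}|lborel. h1 r) - C powr p * (LINT r:{a..b}|lborel. h2 r)
      - c_const p * (LINT r:{a..b}|lborel. h3 r)"
    using h123 by simp
  finally show ?thesis unfolding h1_def h2_def h3_def G'_def by simp
qed

section \<open>Dilations, quasi-balls and polar coordinates\<close>

lemma dil_dil: "r \<ge> 0 \<Longrightarrow> s \<ge> 0 \<Longrightarrow> dil \<nu> r (dil \<nu> s x) = dil \<nu> (r * s) x"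
  by (simp add: dil_def vec_eq_iff powr_mult)

lemma dil_1 [simp]: "dil \<nu> 1 x = x"
  by (simp add: dil_def vec_eq_iff)

lemma dil_0 [simp]: "dil \<nu> 0 x = 0"
  by (simp add: dil_def vec_eq_iff)

lemma linear_dil: "linear (dil \<nu> r)"
  by (rule linearI) (simp_all add: dil_def vec_eq_iff algebra_simps)

lemma dil_eq_sum_axis: "dil \<nu> r y = (\<Sum>i\<in>UNIV. (r powr \<nu> i * y $ i) *\<^sub>R axis i 1)"
  by (simp add: vec_eq_iff dil_def axis_def if_distrib cong: if_cong)

lemma has_derivative_dil_scale:
  assumes "r > 0"
  shows "((\<lambda>s. dil \<nu> s y) has_derivative
    (\<lambda>h. \<Sum>i\<in>UNIV. (h * (\<nu> i * r powr (\<nu> i - 1) * y $ i)) *\<^sub>R axis i 1)) (at r)"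
  unfolding dil_eq_sum_axis using assms
  by (auto intro!: derivative_eq_intros ext sum.cong simp: powr_diff)

lemma continuous_on_dil_scale:
  assumes "\<forall>i. \<nu> i > 0"
  shows "continuous_on {0..} (\<lambda>r. dil \<nu> r x)"
proof -
  have "continuous_on {0..} (\<lambda>r. r powr \<nu> i * x $ i)" for i
    using assms by (intro continuous_on_mult_right continuous_on_powr' continuous_intros) auto
  thus ?thesis unfolding dil_def by (intro continuous_on_vec_lambda)
qed

lemma
  assumes "hom_quasi_norm \<nu> N"
  shows quasi_norm_dil: "r > 0 \<Longrightarrow> N (dil \<nu> r x) = r * N x"
    and quasi_norm_pos: "x \<noteq> 0 \<Longrightarrow> N x > 0"
    and quasi_norm_nonneg: "N x \<ge> 0"
    and continuous_quasi_norm: "continuous_on UNIV N"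
  using assms unfolding hom_quasi_norm_def by (auto simp: order_le_less)

lemma quasi_norm_borel: "hom_quasi_norm \<nu> N \<Longrightarrow> N \<in> borel_measurable borel"
  using continuous_quasi_norm by (auto intro: borel_measurable_continuous_onI)

lemma quasi_norm_normalize:
  assumes "hom_quasi_norm \<nu> N" and "x \<noteq> 0"
  shows "N (dil \<nu> (1 / N x) x) = 1"
  using quasi_norm_dil[OF assms(1), of "1 / N x" x] quasi_norm_pos[OF assms] by simp

text \<open>The minimum of \<open>N\<close> on the Euclidean unit sphere will do: every point outside the unit
  ball is dilated onto the sphere by a factor \<open>\<le> 1\<close>.\<close>

lemma quasi_norm_ge_outside_ball:
  assumes hq: "hom_quasi_norm \<nu> N" and nu: "\<forall>i. \<nu> i > 0"
  obtains m where "m > 0" "\<And>x. norm x \<ge> 1 \<Longrightarrow> N x \<ge> m"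
proof -
  let ?S = "sphere (0::real^'a) 1"
  have "continuous_on ?S N" using continuous_quasi_norm[OF hq] continuous_on_subset by blast
  then obtain z where z: "z \<in> ?S" "\<And>y. y \<in> ?S \<Longrightarrow> N z \<le> N y"
    using continuous_attains_inf[of ?S N] by auto
  show ?thesis
  proof (rule that)
    show "N z > 0" using z by (intro quasi_norm_pos[OF hq]) auto
    fix x :: "real^'a" assume x: "norm x \<ge> 1"
    have "continuous_on {0..1} (\<lambda>r. norm (dil \<nu> r x))"
      by (intro continuous_on_norm continuous_on_subset[OF continuous_on_dil_scale[OF nu]]) auto
    then obtain r where r: "0 \<le> r" "r \<le> 1" "norm (dil \<nu> r x) = 1"
      using IVT'[of "\<lambda>r. norm (dil \<nu> r x)" 0 1 1] x by auto
    have "r > 0" using r by (cases "r = 0") auto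
    have "N z \<le> N (dil \<nu> r x)" using z r by simp
    also have "\<dots> = r * N x" using quasi_norm_dil[OF hq \<open>r > 0\<close>] .
    also have "\<dots> \<le> N x" using r quasi_norm_nonneg[OF hq, of x] by (simp add: mult_left_le_one_le)
    finally show "N z \<le> N x" .
  qed
qed

lemma bounded_quasi_ball:
  assumes hq: "hom_quasi_norm \<nu> N" and nu: "\<forall>i. \<nu> i > 0"
  shows "bounded {x. N x < R}"
proof (cases "R > 0")
  case False
  hence "{x. N x < R} = {}" using quasi_norm_nonneg[OF hq] by (auto simp: not_less intro: order_trans)
  thus ?thesis by simp
next
  case True
  obtain m where m: "m > 0" "\<And>x. norm x \<ge> 1 \<Longrightarrow> N x \<ge> m"
    using quasi_norm_ge_outside_ball[OF hq nu] by blast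
  have "{x. N x < R} \<subseteq> dil \<nu> (R / m) ` ball 0 1"
  proof
    fix y assume y: "y \<in> {x. N x < R}"
    define z where "z = dil \<nu> (m / R) y"
    have "N z = m / R * N y" using m True by (simp add: z_def quasi_norm_dil[OF hq])
    also have "\<dots> < m" using y m True by (simp add: field_simps)
    finally have "N z < m" .
    hence "norm z < 1" using m(2)[of z] by (meson not_less)
    moreover have "y = dil \<nu> (R / m) z" unfolding z_def using m True by (simp add: dil_dil)
    ultimately show "y \<in> dil \<nu> (R / m) ` ball 0 1" by auto
  qed
  moreover have "bounded (dil \<nu> (R / m) ` ball 0 1)"
    by (intro bounded_linear_image linear_dil[THEN linear_conv_bounded_linear[THEN iffD1]]) auto
  ultimately show ?thesis using bounded_subset by blast
qed

lemma fmeasurable_quasi_ball: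
  assumes hq: "hom_quasi_norm \<nu> N" and nu: "\<forall>i. \<nu> i > 0"
  shows "{x. N x < R} \<in> fmeasurable lborel"
proof -
  have "open {x. N x < R}"
    using continuous_quasi_norm[OF hq] by (auto intro!: open_Collect_less continuous_on_const)
  then have "{x. N x < R} \<in> lmeasurable" "{x. N x < R} \<in> sets lborel"
    using lmeasurable_open[OF bounded_quasi_ball[OF hq nu]] borel_open by auto
  then show ?thesis by (auto simp: fmeasurable_def)
qed

lemma measure_quasi_ball:
  assumes hq: "hom_quasi_norm \<nu> N" and nu: "\<forall>i. \<nu> i > 0" and r: "r > 0"
  shows "measure lborel {x. N x < r} = measure lborel {x. N x < 1} * r powr hom_dim \<nu>"
proof -
  have eq: "{x. N x < r} = (\<lambda>x. \<chi> k. r powr \<nu> k * x $ k) ` {x. N x < 1}"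
  proof (intro set_eqI iffI)
    fix y assume y: "y \<in> {x. N x < r}"
    have "N (dil \<nu> (1 / r) y) < 1" using y r quasi_norm_dil[OF hq, of "1 / r" y] by simp
    moreover have "y = dil \<nu> r (dil \<nu> (1 / r) y)" using r by (simp add: dil_dil)
    ultimately show "y \<in> (\<lambda>x. \<chi> k. r powr \<nu> k * x $ k) ` {x. N x < 1}"
      unfolding dil_def[of _ r] by blast
  next
    fix y assume "y \<in> (\<lambda>x. \<chi> k. r powr \<nu> k * x $ k) ` {x. N x < 1}"
    then obtain z where "N z < 1" "y = dil \<nu> r z" unfolding dil_def by auto
    thus "y \<in> {x. N x < r}" using quasi_norm_dil[OF hq r] r by simp
  qed
  have "{x. N x < 1} \<in> lmeasurable"
    using fmeasurable_quasi_ball[OF hq nu] by (simp add: fmeasurable_def)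
  then have "measure lebesgue {x. N x < r} = \<bar>\<Prod>k\<in>UNIV. r powr \<nu> k\<bar> * measure lebesgue {x. N x < 1}"
    unfolding eq by (rule measure_stretch)
  also have "(\<Prod>k\<in>UNIV. r powr \<nu> k) = r powr hom_dim \<nu>"
    using r by (simp add: hom_dim_def powr_sum)
  finally show ?thesis
    using fmeasurable_quasi_ball[OF hq nu] by (simp add: fmeasurable_def mult.commute)
qed

lemma hom_dim_pos: "\<forall>i. \<nu> i > 0 \<Longrightarrow> hom_dim \<nu> > 0"
  unfolding hom_dim_def by (intro sum_pos) auto

lemma measure_eqI_Iio:
  fixes M N :: "real measure"
  assumes sets: "sets M = sets borel" "sets N = sets borel"
  assumes fin: "\<And>x. emeasure M {..< x} < \<infinity>"
  assumes eq: "\<And>x. emeasure M {..< x} = emeasure N {..< x}"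
  shows "M = N"
proof (rule measure_eqI_generator_eq_countable)
  let ?LT = "\<lambda>a::real. {..< a}" let ?E = "range ?LT"
  show "Int_stable ?E"
  proof (rule Int_stableI)
    fix A B assume "A \<in> ?E" "B \<in> ?E"
    then obtain a b where "A = {..<a}" "B = {..<b}" by auto
    then show "A \<inter> B \<in> ?E" by (auto intro: image_eqI[where x="min a b"])
  qed
  show "?E \<subseteq> Pow UNIV" "sets M = sigma_sets UNIV ?E" "sets N = sigma_sets UNIV ?E"
    unfolding sets borel_Iio by auto
  have "\<exists>q\<in>\<rat>. x < q" for x :: real
    using Rats_no_top_le[of "x + 1"] by (metis less_add_one order_less_le_trans)
  then show "?LT`Rats \<subseteq> ?E" "(\<Union>i\<in>Rats. ?LT i) = UNIV" "\<And>a. a \<in> ?LT`Rats \<Longrightarrow> emeasure M a \<noteq> \<infinity>"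
    using fin by (auto simp: less_top)
qed (auto intro: eq countable_rat)

lemma emeasure_quasi_ball:
  assumes hq: "hom_quasi_norm \<nu> N" and nu: "\<forall>i. \<nu> i > 0"
  shows "emeasure lborel {y. N y < x}
    = (if x > 0 then ennreal (measure lborel {y. N y < 1} * x powr hom_dim \<nu>) else 0)"
proof (cases "x > 0")
  case True
  then show ?thesis using fmeasurable_quasi_ball[OF hq nu] measure_quasi_ball[OF hq nu True]
    by (simp add: emeasure_eq_measure2)
next
  case False
  then have "{y. N y < x} = {}" by (auto dest: le_less_trans[OF quasi_norm_nonneg[OF hq]])
  then show ?thesis using False by simp
qed

text \<open>The density is the derivative of \<open>r \<mapsto> |{x. N x < r}| = |{x. N x < 1}| r\<^sup>Q\<close>.\<close>

lemma distr_quasi_norm: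
  fixes N :: "real^'n::finite \<Rightarrow> real"
  assumes hq: "hom_quasi_norm \<nu> N" and nu: "\<forall>i. \<nu> i > 0"
  shows "distr lborel borel N = density lborel (\<lambda>r. ennreal (indicator {0<..} r
    * (hom_dim \<nu> * measure lborel {x. N x < 1} * r powr (hom_dim \<nu> - 1))))"
    (is "_ = density lborel (\<lambda>r. ennreal (?w r))")
proof -
  define Q where "Q = hom_dim \<nu>"
  define m1 where "m1 = measure lborel {x. N x < 1}"
  have Q: "Q > 0" unfolding Q_def by (rule hom_dim_pos[OF nu])
  have N[measurable]: "N \<in> borel_measurable borel" by (rule quasi_norm_borel[OF hq])
  have L: "emeasure (distr lborel borel N) {..<x} = emeasure lborel {y. N y < x}" for x
    by (subst emeasure_distr) (auto intro!: arg_cong[where f="emeasure lborel"])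
  have R: "emeasure (density lborel (\<lambda>r. ennreal (?w r))) {..<x}
      = (if x > 0 then ennreal (m1 * x powr Q) else 0)" for x
  proof -
    have "emeasure (density lborel (\<lambda>r. ennreal (?w r))) {..<x}
        = (\<integral>\<^sup>+ r. ennreal (?w r) * indicator {..<x} r \<partial>lborel)"
      by (subst emeasure_density) auto
    also have "\<dots> = (if x > 0 then ennreal (m1 * x powr Q) else 0)"
    proof (cases "x > 0")
      case True
      have "(\<integral>\<^sup>+ r. ennreal (?w r) * indicator {..<x} r \<partial>lborel)
          = (\<integral>\<^sup>+ r. ennreal (indicator {0..x} r * (Q * m1 * r powr (Q - 1))) \<partial>lborel)"
        using AE_lborel_singleton[of x]
        by (intro nn_integral_cong_AE) (auto simp: Q_def m1_def elim!: eventually_mono split: split_indicator)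
      also have "\<dots> = ennreal (Q * m1 * (x powr (Q - 1 + 1) / (Q - 1 + 1)))"
        using Q True by (intro nn_integral_has_integral_lebesgue has_integral_mult_right
            has_integral_powr_from_0) (auto simp: m1_def)
      also have "\<dots> = ennreal (m1 * x powr Q)" using Q by simp
      finally show ?thesis using True by simp
    next
      case False
      then have "(\<lambda>r. ennreal (?w r) * indicator {..<x} r) = (\<lambda>r. 0)"
        by (auto simp: fun_eq_iff split: split_indicator)
      thus ?thesis using False by simp
    qed
    finally show ?thesis .
  qed
  show ?thesis
  proof (rule measure_eqI_Iio)
    show "emeasure (distr lborel borel N) {..<x} = emeasure (density lborel (\<lambda>r. ennreal (?w r))) {..<x}"
      and "emeasure (distr lborel borel N) {..<x} < \<infinity>" for x
      unfolding L R emeasure_quasi_ball[OF hq nu] by (simp_all add: Q_def m1_def)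
  qed simp_all
qed

lemma integral_radial:
  fixes N :: "real^'n::finite \<Rightarrow> real" and F :: "real^'n \<Rightarrow> real" and h :: "real \<Rightarrow> real"
  assumes hq: "hom_quasi_norm \<nu> N" and nu: "\<forall>i. \<nu> i > 0" and a: "0 < a"
    and h: "continuous_on {a..b} h" and h0: "\<And>r. 0 < r \<Longrightarrow> r \<notin> {a..b} \<Longrightarrow> h r = 0"
    and F: "\<And>x. x \<noteq> 0 \<Longrightarrow> F x = h (N x)"
  shows "integral\<^sup>L lborel F = hom_dim \<nu> * measure lborel {x. N x < 1}
    * (LINT r:{a..b}|lborel. r powr (hom_dim \<nu> - 1) * h r)"
proof -
  define \<sigma> where "\<sigma> = hom_dim \<nu> * measure lborel {x. N x < 1}"
  define H where "H r = indicator {a..b} r * h r" for r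
  have [measurable]: "N \<in> borel_measurable borel" "H \<in> borel_measurable borel"
    using quasi_norm_borel[OF hq] borel_measurable_continuous_on_indicator[OF _ h]
    unfolding H_def by simp_all
  have FH: "F x = H (N x)" if "x \<noteq> 0" for x
    using F[OF that] h0[OF quasi_norm_pos[OF hq that]] by (auto simp: H_def split: split_indicator)
  have "F = (\<lambda>x. if x = 0 then F 0 else H (N x))" using FH by auto
  also have "\<dots> \<in> borel_measurable lborel" by measurable
  finally have [measurable]: "F \<in> borel_measurable lborel" .
  have "integral\<^sup>L lborel F = integral\<^sup>L lborel (\<lambda>x. H (N x))"
    using AE_lborel_singleton[of 0] FH by (intro integral_cong_AE) (auto elim!: eventually_mono)
  also have "\<dots> = integral\<^sup>L (distr lborel borel N) H" by (simp add: integral_distr)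
  also have "\<dots> = (\<integral>r. indicator {0<..} r * (\<sigma> * r powr (hom_dim \<nu> - 1)) * H r \<partial>lborel)"
    unfolding distr_quasi_norm[OF hq nu] \<sigma>_def
    by (subst integral_density) (auto simp: hom_dim_pos[OF nu, THEN less_imp_le])
  also have "\<dots> = \<sigma> * (LINT r:{a..b}|lborel. r powr (hom_dim \<nu> - 1) * h r)"
    unfolding set_lebesgue_integral_def using a
    by (subst integral_mult_right_zero[symmetric], intro Bochner_Integration.integral_cong)
       (auto simp: H_def split: split_indicator)
  finally show ?thesis by (simp add: \<sigma>_def)
qed

section \<open>Radial functions\<close>

lemma rad_deriv_radial:
  assumes hq: "hom_quasi_norm \<nu> N" and x: "x \<noteq> 0"
    and D: "(\<phi> has_real_derivative D) (at (N x))" and \<psi>: "\<And>z. \<psi> z = \<phi> (N z)"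
  shows "rad_deriv \<nu> N \<psi> x = D"
proof -
  define y where "y = dil \<nu> (1 / N x) x"
  have "N y = 1" unfolding y_def by (rule quasi_norm_normalize[OF hq x])
  then have "((\<lambda>r. \<psi> (dil \<nu> r y)) has_real_derivative D) (at (N x))"
    using quasi_norm_pos[OF hq x] quasi_norm_dil[OF hq]
    by (intro has_field_derivative_transform_within_open[OF D, where S="{0<..}"]) (auto simp: \<psi>)
  then show ?thesis unfolding rad_deriv_def y_def by (rule DERIV_imp_deriv)
qed

lemma smooth_fun_has_derivative:
  "smooth_fun f \<Longrightarrow> (f has_derivative frechet_derivative f (at x)) (at x)"
  by (auto elim: smooth_fun.cases simp: frechet_derivative_works)

lemma smooth_fun_continuous_derivative:
  assumes "smooth_fun f"
  shows "continuous_on UNIV (\<lambda>x. frechet_derivative f (at x) v)"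
proof -
  have "smooth_fun (\<lambda>x. frechet_derivative f (at x) v)"
    using assms by (auto elim: smooth_fun.cases)
  then show ?thesis
    by (auto elim!: smooth_fun.cases intro!: differentiable_imp_continuous_on simp: differentiable_on_def)
qed

lemma exists_quasi_unit:
  assumes "hom_quasi_norm \<nu> (N :: real^'n::finite \<Rightarrow> real)"
  obtains y where "N y = 1"
proof
  show "N (dil \<nu> (1 / N 1) 1) = 1"
    by (rule quasi_norm_normalize[OF assms]) (simp add: vec_eq_iff)
qed

text \<open>On \<open>(0, \<infinity>)\<close> the profile is \<open>f\<close> restricted to the dilation orbit \<open>r \<mapsto> r y\<close> of a point
  with \<open>N y = 1\<close>, so the chain rule gives its derivative.\<close>

lemma radial_profile_C1:
  fixes f :: "real^'n::finite \<Rightarrow> real"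
  assumes hq: "hom_quasi_norm \<nu> N" and nu: "\<forall>i. \<nu> i > 0"
    and f: "smooth_fun f" and ft: "\<forall>x. f x = ft (N x)"
  obtains d where "\<And>r. r > 0 \<Longrightarrow> (ft has_real_derivative d r) (at r)" "continuous_on {0<..} d"
proof -
  obtain y where y: "N y = 1" using exists_quasi_unit[OF hq] .
  define Df where "Df z = frechet_derivative f (at z)" for z
  define \<gamma>' where "\<gamma>' i r = \<nu> i * r powr (\<nu> i - 1) * y $ i" for i r
  define d where "d r = (\<Sum>i\<in>UNIV. \<gamma>' i r * Df (dil \<nu> r y) (axis i 1))" for r
  show ?thesis
  proof
    fix r :: real assume r: "r > 0"
    note has_derivative_dil_scale[OF r, of \<nu> y, folded \<gamma>'_def]
    from has_derivative_compose[OF this smooth_fun_has_derivative[OF f]]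
    have "((\<lambda>r. f (dil \<nu> r y)) has_derivative
        (\<lambda>h. Df (dil \<nu> r y) (\<Sum>i\<in>UNIV. (h * \<gamma>' i r) *\<^sub>R axis i 1))) (at r)"
      by (simp add: Df_def)
    moreover have "Df (dil \<nu> r y) (\<Sum>i\<in>UNIV. (h * \<gamma>' i r) *\<^sub>R axis i 1) = d r * h" for h
      using has_derivative_linear[OF smooth_fun_has_derivative[OF f]]
      by (simp add: d_def Df_def linear_sum linear_scale sum_distrib_right algebra_simps)
    ultimately have "((\<lambda>r. f (dil \<nu> r y)) has_real_derivative d r) (at r)"
      by (simp add: has_field_derivative_def mult_commute_abs)
    then show "(ft has_real_derivative d r) (at r)"
    proof (rule has_field_derivative_transform_within_open[where S="{0<..}"])
      show "f (dil \<nu> s y) = ft s" if "s \<in> {0<..}" for s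
        using ft quasi_norm_dil[OF hq, of s y] y that by simp
    qed (use r in auto)
  next
    have "continuous_on {0<..} (\<lambda>r. dil \<nu> r y)"
      using continuous_on_dil_scale[OF nu] by (rule continuous_on_subset) auto
    with smooth_fun_continuous_derivative[OF f]
    have Df: "continuous_on {0<..} (\<lambda>r. Df (dil \<nu> r y) (axis i 1))" for i
      unfolding Df_def by (rule continuous_on_compose2) auto
    show "continuous_on {0<..} d"
      unfolding d_def \<gamma>'_def by (intro continuous_intros Df) auto
  qed
qed

lemma radial_profile_support:
  fixes f :: "real^'n::finite \<Rightarrow> real"
  assumes hq: "hom_quasi_norm \<nu> N" and ft: "\<forall>x. f x = ft (N x)"
    and K: "compact (closure {x. f x \<noteq> 0})" and K0: "0 \<notin> closure {x. f x \<noteq> 0}"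
  obtains a b where "0 < a" "a \<le> b" "\<And>r. r > 0 \<Longrightarrow> ft r \<noteq> 0 \<Longrightarrow> a \<le> r \<and> r \<le> b"
proof -
  define K where "K = closure {x. f x \<noteq> 0}"
  obtain y where y: "N y = 1" using exists_quasi_unit[OF hq] .
  have inK: "dil \<nu> r y \<in> K" "N (dil \<nu> r y) = r" if "r > 0" "ft r \<noteq> 0" for r
  proof -
    show N1: "N (dil \<nu> r y) = r" using quasi_norm_dil[OF hq that(1), of y] y by simp
    then show "dil \<nu> r y \<in> K" using ft that closure_subset unfolding K_def by fastforce
  qed
  show ?thesis
  proof (cases "K = {}")
    case True
    then show ?thesis using inK by (intro that[of 1 1]) auto
  next
    case False
    have cK: "continuous_on K N" using continuous_quasi_norm[OF hq] by (rule continuous_on_subset) simp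
    obtain k1 where k1: "k1 \<in> K" "\<And>y. y \<in> K \<Longrightarrow> N k1 \<le> N y"
      using continuous_attains_inf[OF _ False cK] K by (auto simp: K_def)
    obtain k2 where k2: "k2 \<in> K" "\<And>y. y \<in> K \<Longrightarrow> N y \<le> N k2"
      using continuous_attains_sup[OF _ False cK] K by (auto simp: K_def)
    show ?thesis
    proof (rule that)
      show "N k1 > 0" using k1(1) K0 by (intro quasi_norm_pos[OF hq]) (auto simp: K_def)
      show "N k1 \<le> N k2" using k2(2)[OF k1(1)] .
      fix r assume "r > 0" "ft r \<noteq> 0"
      then show "N k1 \<le> r \<and> r \<le> N k2" using inK k1(2) k2(2) by metis
    qed
  qed
qed

lemma deriv_zero_on_open:
  assumes "(g has_real_derivative D) (at r)" "open S" "r \<in> S" "\<And>s. s \<in> S \<Longrightarrow> g s = 0"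
  shows "D = 0"
proof -
  have "((\<lambda>_. 0::real) has_real_derivative D) (at r)"
    by (rule has_field_derivative_transform_within_open[OF assms(1-3)]) (use assms(4) in auto)
  then show ?thesis using DERIV_const DERIV_unique by blast
qed

lemma radial_profile:
  fixes f :: "real^'n::finite \<Rightarrow> real"
  assumes hq: "hom_quasi_norm \<nu> N" and nu: "\<forall>i. \<nu> i > 0"
    and f: "smooth_fun f" and ft: "\<forall>x. f x = ft (N x)"
    and K: "compact (closure {x. f x \<noteq> 0})" and K0: "0 \<notin> closure {x. f x \<noteq> 0}"
  obtains a b d where "0 < a" "a \<le> b"
    "\<And>r. r > 0 \<Longrightarrow> (ft has_real_derivative d r) (at r)" "continuous_on {0<..} d"
    "\<And>r. r > 0 \<Longrightarrow> r \<notin> {a<..<b} \<Longrightarrow> ft r = 0 \<and> d r = 0"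
proof -
  obtain d where d: "\<And>r. r > 0 \<Longrightarrow> (ft has_real_derivative d r) (at r)" "continuous_on {0<..} d"
    using radial_profile_C1[OF hq nu f ft] by blast
  obtain a0 b0 where ab0: "0 < a0" "a0 \<le> b0" "\<And>r. r > 0 \<Longrightarrow> ft r \<noteq> 0 \<Longrightarrow> a0 \<le> r \<and> r \<le> b0"
    using radial_profile_support[OF hq ft K K0] by blast
  have ft0: "ft r = 0" if "r > 0" "r < a0 \<or> b0 < r" for r using ab0(3)[OF that(1)] that(2) by force
  have d0: "d r = 0" if "r > 0" "r < a0 \<or> b0 < r" for r
  proof (cases "r < a0")
    case True
    then show ?thesis using that ft0 by (intro deriv_zero_on_open[OF d(1)[OF that(1)], of "{0<..<a0}"]) auto
  next
    case False
    then show ?thesis using that ft0 ab0 by (intro deriv_zero_on_open[OF d(1)[OF that(1)], of "{b0<..}"]) auto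
  qed
  show ?thesis
  proof (rule that[of "a0 / 2" "2 * b0" d])
    show "0 < a0 / 2" "a0 / 2 \<le> 2 * b0" using ab0 by auto
    fix r assume r: "r > 0" "r \<notin> {a0 / 2<..<2 * b0}"
    then have "r < a0 \<or> b0 < r" using ab0 by auto
    then show "ft r = 0 \<and> d r = 0" using ft0 d0 r by blast
  qed (use d in auto)
qed

lemma hardy_radial:
  fixes N :: "real^'n::finite \<Rightarrow> real" and f :: "real^'n \<Rightarrow> real" and ft d :: "real \<Rightarrow> real"
  assumes hq: "hom_quasi_norm \<nu> N" and nu: "\<forall>i. \<nu> i > 0"
    and p: "p \<ge> 2" and C: "C > 0" and Cp: "C * p = hom_dim \<nu> - p - \<alpha> * p"
    and ab: "0 < a" "a \<le> b"
    and d: "\<And>r. r > 0 \<Longrightarrow> (ft has_real_derivative d r) (at r)" and dc: "continuous_on {0<..} d"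
    and supp: "\<And>r. r > 0 \<Longrightarrow> r \<notin> {a<..<b} \<Longrightarrow> ft r = 0 \<and> d r = 0"
    and ft: "\<forall>x. f x = ft (N x)"
  shows "c_const p * (\<integral>x. \<bar>rad_deriv \<nu> N (\<lambda>y. N y powr C * f y) x\<bar> powr p
             * N x powr (p - hom_dim \<nu>) \<partial>lborel)
    \<le> (\<integral>x. \<bar>rad_deriv \<nu> N f x\<bar> powr p / N x powr (\<alpha> * p) \<partial>lborel)
      - C powr p * (\<integral>x. \<bar>f x\<bar> powr p / N x powr ((\<alpha> + 1) * p) \<partial>lborel)"
proof -
  define Q where "Q = hom_dim \<nu>"
  define \<sigma> where "\<sigma> = Q * measure lborel {x. N x < 1}"
  have \<sigma>: "\<sigma> \<ge> 0" using hom_dim_pos[OF nu] by (simp add: \<sigma>_def Q_def)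
  have d': "(ft has_real_derivative d r) (at r)" if "r \<in> {a..b}" for r using d that ab by auto
  have ab0: "{a..b} \<subseteq> {0<..}" using ab by auto
  have cont: "continuous_on {a..b} d" "continuous_on {a..b} ft"
    using continuous_on_subset[OF dc ab0]
    by (auto intro!: continuous_at_imp_continuous_on DERIV_isCont[OF d'])
  have radf: "rad_deriv \<nu> N f x = d (N x)" if "x \<noteq> 0" for x
    using ft by (intro rad_deriv_radial[OF hq that d[OF quasi_norm_pos[OF hq that]]]) simp
  have radg: "rad_deriv \<nu> N (\<lambda>y. N y powr C * f y) x
      = C * N x powr (C - 1) * ft (N x) + N x powr C * d (N x)" if "x \<noteq> 0" for x
    using quasi_norm_pos[OF hq that] ft
    by (intro rad_deriv_radial[OF hq that]) (auto intro!: derivative_eq_intros d simp: algebra_simps)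
  note radial = integral_radial[OF hq nu ab(1), folded Q_def, folded \<sigma>_def]
  have I1: "(\<integral>x. \<bar>rad_deriv \<nu> N f x\<bar> powr p / N x powr (\<alpha> * p) \<partial>lborel)
      = \<sigma> * (LINT r:{a..b}|lborel. r powr (Q - 1) * (\<bar>d r\<bar> powr p / r powr (\<alpha> * p)))"
    using ab cont p supp by (intro radial) (auto intro!: continuous_intros simp: radf)
  have I2: "(\<integral>x. \<bar>f x\<bar> powr p / N x powr ((\<alpha> + 1) * p) \<partial>lborel)
      = \<sigma> * (LINT r:{a..b}|lborel. r powr (Q - 1) * (\<bar>ft r\<bar> powr p / r powr ((\<alpha> + 1) * p)))"
    using ab cont p supp ft by (intro radial) (auto intro!: continuous_intros)
  have I3: "(\<integral>x. \<bar>rad_deriv \<nu> N (\<lambda>y. N y powr C * f y) x\<bar> powr p * N x powr (p - Q) \<partial>lborel)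
      = \<sigma> * (LINT r:{a..b}|lborel. r powr (Q - 1)
          * (\<bar>C * r powr (C - 1) * ft r + r powr C * d r\<bar> powr p * r powr (p - Q)))"
    using ab cont p supp by (intro radial) (auto intro!: continuous_intros simp: radg)
  have "c_const p * (LINT r:{a..b}|lborel. r powr (Q - 1)
          * (\<bar>C * r powr (C - 1) * ft r + r powr C * d r\<bar> powr p * r powr (p - Q)))
      \<le> (LINT r:{a..b}|lborel. r powr (Q - 1) * (\<bar>d r\<bar> powr p / r powr (\<alpha> * p)))
        - C powr p * (LINT r:{a..b}|lborel. r powr (Q - 1) * (\<bar>ft r\<bar> powr p / r powr ((\<alpha> + 1) * p)))"
    using ab supp[of a] supp[of b] by (intro hardy_interval[OF p C Cp[folded Q_def] ab d' cont(1)]) auto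
  from mult_left_mono[OF this \<sigma>] show ?thesis
    unfolding Q_def[symmetric] I1 I2 I3 by (simp add: algebra_simps)
qed

theorem mainTheorem5:
  fixes gmul :: "real^'n::finite \<Rightarrow> real^'n \<Rightarrow> real^'n"
    and \<nu> :: "'n \<Rightarrow> real"
    and N :: "real^'n \<Rightarrow> real"
    and f :: "real^'n \<Rightarrow> real"
    and ft :: "real \<Rightarrow> real"
    and p \<alpha> :: real
  assumes "homogeneous_group gmul \<nu>"
    and "hom_quasi_norm \<nu> N"
    and "hom_dim \<nu> \<ge> 3"
    and "2 \<le> p" and "p < hom_dim \<nu>"
    and "\<alpha> < (hom_dim \<nu> - p) / p"
    and "smooth_fun f"
    and "compact (closure {x. f x \<noteq> 0})"
    and "0 \<notin> closure {x. f x \<noteq> 0}"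
    and "\<forall>x. f x = ft (N x)"
  shows "(\<integral>x. \<bar>rad_deriv \<nu> N f x\<bar> powr p / N x powr (\<alpha> * p) \<partial>lborel)
         - ((hom_dim \<nu> - p - \<alpha> * p) / p) powr p
           * (\<integral>x. \<bar>f x\<bar> powr p / N x powr ((\<alpha> + 1) * p) \<partial>lborel)
         \<ge> c_const p *
           (\<integral>x. \<bar>rad_deriv \<nu> N (\<lambda>y. N y powr ((hom_dim \<nu> - p - \<alpha> * p) / p) * f y) x\<bar> powr p
                 * N x powr (p - hom_dim \<nu>) \<partial>lborel)"
proof -
  note hq = assms(2) and p = assms(4)
  have nu: "\<forall>i. \<nu> i > 0" using assms(1) by (simp add: homogeneous_group_def)
  define C where "C = (hom_dim \<nu> - p - \<alpha> * p) / p"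
  have "C > 0" using assms(6) p by (simp add: C_def field_simps)
  moreover have "C * p = hom_dim \<nu> - p - \<alpha> * p" using p by (simp add: C_def)
  moreover obtain a b d where "0 < a" "a \<le> b" "\<And>r. r > 0 \<Longrightarrow> (ft has_real_derivative d r) (at r)"
    "continuous_on {0<..} d" "\<And>r. r > 0 \<Longrightarrow> r \<notin> {a<..<b} \<Longrightarrow> ft r = 0 \<and> d r = 0"
    using radial_profile[OF hq nu assms(7,10,8,9)] by blast
  ultimately show ?thesis
    using hardy_radial[OF hq nu p, of C \<alpha> a b ft d f] assms(10) by (simp add: C_def)
qed

end
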